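(* Let $p$ be a prime and choose natural numbers $l,k$ with $3l \leq p+1$ and $k \leq l$. Let $\mathcal{A} \subseteq \mathbb{F}_p$ be a set of $k$ positions and $\mathcal{A}^c = \mathbb{F}_p \setminus \mathcal{A}$. Let $\mathcal{Q}$ be the qudit stabilizer code on $p-k$ qudits of dimension $p$ (indexed by $\mathcal{A}^c$) whose stabilizer group is generated by the operators $X^{v}$ for $v \in \mathsf{SRS}_{l,\mathcal{A}}$ and $Z^{w}$ for $w \in \mathsf{SRS}_{p-l,\mathcal{A}}$. Then $\mathcal{Q}$ is a $[[p-k,k,l-k]]$ quantum code, i.e. it acts on $p-k$ qudits, its code space has dimension $p^{k}$ (it encodes $k$ logical qudits), and its distance is $l-k$.
   Context: For a prime $p$, $X$ and $Z$ are the qudit shift and boost operators on $\mathbb{C}^p$: $X\ket{j}=\ket{j+1}$, $Z\ket{j}=\omega^j\ket{j}$ for $j \in \mathbb{F}_p$, with $\omega = e^{2\pi i/p}$; for $g \in \mathbb{F}_p^n$, $X^{g}=\bigotimes_i X^{g_i}$ and $Z^{g}=\bigotimes_i Z^{g_i}$. Let $\mathcal{R} = \mathbb{F}_p[x]/(x^p-x)$ (polynomials of degree at most $p-1$) and $\mathsf{ev}(\alpha) = (\alpha(u))_{u \in \mathbb{F}_p} \in \mathbb{F}_p^p$. For $l \leq p$, the Reed–Solomon code is $\mathsf{RS}_l = \operatorname{span}\{\mathsf{ev}(\alpha) : \alpha \in \mathcal{R}, \deg \alpha < l\}$. For $u \in \mathbb{F}_p^p$ and $\mathcal{B} \subseteq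 \mathbb{F}_p$, $u|_{\mathcal{B}}$ is the restriction of $u$ to the coordinates in $\mathcal{B}$. The shortened Reed–Solomon code is $\mathsf{SRS}_{r,\mathcal{A}} = \{u|_{\mathcal{A}^c} : u \in \mathsf{RS}_{r},\ u|_{\mathcal{A}} = 0\}$. The distance of a qudit stabilizer code is the minimum number of qudits on which a generalized Pauli operator (tensor product of powers of $X$ and $Z$, up to phase) acts nontrivially, among those that commute with all stabilizers but are not (up to phase) in the stabilizer group. *)

theory Defs
  imports "HOL-Analysis.Analysis" "HOL-Library.Function_Algebras"
begin

text \<open>The field F_p is represented by the naturals 0..<p with arithmetic mod p.
  Coordinate positions (elements of F_p) are naturals < p.  A vector in F_p^S (S a set of
  positions) is a function nat => nat with values < p on S and value 0 outside S.\<close>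

definition vecs :: "nat \<Rightarrow> nat set \<Rightarrow> (nat \<Rightarrow> nat) set" where
  "vecs p S = {u. (\<forall>i\<in>S. u i < p) \<and> (\<forall>i. i \<notin> S \<longrightarrow> u i = 0)}"

definition ev :: "nat \<Rightarrow> nat \<Rightarrow> (nat \<Rightarrow> nat) \<Rightarrow> (nat \<Rightarrow> nat)" where
  "ev p r c = (\<lambda>u. if u < p then (\<Sum>i<r. c i * u ^ i) mod p else 0)"

text \<open>Reed-Solomon code RS_r (r <= p): evaluations of polynomials of degree < r
  (this set is already closed under F_p-linear combinations, i.e. equals their span).\<close>
definition RS :: "nat \<Rightarrow> nat \<Rightarrow> (nat \<Rightarrow> nat) set" where
  "RS p r = {ev p r c | c. \<forall>i. c i < p}"

definition restr :: "nat set \<Rightarrow> (nat \<Rightarrow> nat) \<Rightarrow> (nat \<Rightarrow> nat)" where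
  "restr S u = (\<lambda>i. if i \<in> S then u i else 0)"

definition SRS :: "nat \<Rightarrow> nat \<Rightarrow> nat set \<Rightarrow> (nat \<Rightarrow> nat) set" where
  "SRS p r A = {restr ({0..<p} - A) u | u. u \<in> RS p r \<and> (\<forall>i\<in>A. u i = 0)}"

text \<open>Hilbert space of qudits indexed by S: complex functions on the computational basis
  F_p^S (vanishing outside it).\<close>
type_synonym state = "(nat \<Rightarrow> nat) \<Rightarrow> complex"

definition hilb :: "nat \<Rightarrow> nat set \<Rightarrow> state set" where
  "hilb p S = {\<psi>. \<forall>x. x \<notin> vecs p S \<longrightarrow> \<psi> x = 0}"

definition vsub :: "nat \<Rightarrow> (nat \<Rightarrow> nat) \<Rightarrow> (nat \<Rightarrow> nat) \<Rightarrow> (nat \<Rightarrow> nat)" where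
  "vsub p x a = (\<lambda>i. (x i + (p - a i mod p)) mod p)"

definition omega :: "nat \<Rightarrow> complex" where
  "omega p = cis (2 * pi / real p)"

text \<open>X^a: |x> |-> |x + a>, i.e. (X^a psi)(x) = psi(x - a).\<close>
definition Xop :: "nat \<Rightarrow> nat set \<Rightarrow> (nat \<Rightarrow> nat) \<Rightarrow> state \<Rightarrow> state" where
  "Xop p S a \<psi> = (\<lambda>x. if x \<in> vecs p S then \<psi> (vsub p x a) else 0)"

definition Zop :: "nat \<Rightarrow> nat set \<Rightarrow> (nat \<Rightarrow> nat) \<Rightarrow> state \<Rightarrow> state" where
  "Zop p S b \<psi> = (\<lambda>x. if x \<in> vecs p S then omega p ^ (\<Sum>i\<in>S. b i * x i) * \<psi> x else 0)"

text \<open>Generalized Pauli operator X^a Z^b (every generalized Pauli is of this form up to phase).\<close>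
definition pauli :: "nat \<Rightarrow> nat set \<Rightarrow> (nat \<Rightarrow> nat) \<Rightarrow> (nat \<Rightarrow> nat) \<Rightarrow> state \<Rightarrow> state" where
  "pauli p S a b = Xop p S a \<circ> Zop p S b"

definition pweight :: "nat set \<Rightarrow> (nat \<Rightarrow> nat) \<Rightarrow> (nat \<Rightarrow> nat) \<Rightarrow> nat" where
  "pweight S a b = card {i\<in>S. a i \<noteq> 0 \<or> b i \<noteq> 0}"

inductive_set gen_group :: "(state \<Rightarrow> state) set \<Rightarrow> (state \<Rightarrow> state) set" for G where
  gen_id: "id \<in> gen_group G"
| gen_mult: "g \<in> G \<Longrightarrow> h \<in> gen_group G \<Longrightarrow> g \<circ> h \<in> gen_group G"

definition css_gens :: "nat \<Rightarrow> nat set \<Rightarrow> (nat \<Rightarrow> nat) set \<Rightarrow> (nat \<Rightarrow> nat) set \<Rightarrow> (state \<Rightarrow> state) set" where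
  "css_gens p S CX CZ = {Xop p S v | v. v \<in> CX} \<union> {Zop p S w | w. w \<in> CZ}"

definition code_space :: "nat \<Rightarrow> nat set \<Rightarrow> (state \<Rightarrow> state) set \<Rightarrow> state set" where
  "code_space p S G = {\<psi> \<in> hilb p S. \<forall>g \<in> gen_group G. g \<psi> = \<psi>}"

definition cdim :: "state set \<Rightarrow> nat" where
  "cdim V = vector_space.dim (\<lambda>(c::complex) (\<psi>::state). (\<lambda>x. c * \<psi> x)) V"

definition logical_pauli :: "nat \<Rightarrow> nat set \<Rightarrow> (state \<Rightarrow> state) set
    \<Rightarrow> (nat \<Rightarrow> nat) \<Rightarrow> (nat \<Rightarrow> nat) \<Rightarrow> bool" where
  "logical_pauli p S G a b \<longleftrightarrow> a \<in> vecs p S \<and> b \<in> vecs p S \<and>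
     (\<forall>g \<in> gen_group G. \<forall>\<psi> \<in> hilb p S. pauli p S a b (g \<psi>) = g (pauli p S a b \<psi>)) \<and>
     \<not> (\<exists>c g. cmod c = 1 \<and> g \<in> gen_group G \<and>
            (\<forall>\<psi> \<in> hilb p S. pauli p S a b \<psi> = (\<lambda>x. c * g \<psi> x)))"

end

theory Submission
  imports Defs "HOL-Computational_Algebra.Polynomial"
begin

text \<open>The code space consists of the states supported on the dual CZ_dual of the Z-code that
  are invariant under translation by the X-code CX, so its dimension is the number of cosets of
  CX in CZ_dual. Since RS_l is orthogonal to RS_(p-l) (the power sums of F_p vanish below
  degree p - 1), CZ_dual is exactly the restriction of RS_l to A^c, and a coset is determined by
  the values on A of the RS_l codeword extending a representative: there are p^k of them.
  For the distance, a Pauli operator X^a Z^b commuting with all stabilizers has a orthogonal to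
  the Z-code and b orthogonal to the X-code. A shortened code SRS_(r,A) contains, for every set of
  fewer than r - k positions and a point outside it, a word vanishing on the set but not at the
  point; hence a and b vanish if their joint support has fewer than l - k points.\<close>

section \<open>Residues modulo p\<close>

lemma eq_if_dvd_diff_less:
  fixes p u v :: nat
  assumes "int p dvd int u - int v" "u < p" "v < p"
  shows "u = v"
  using assms dvd_imp_le_int[of "int u - int v" "int p"] by (cases "u = v") auto

lemma prime_dvd_mult_less_imp_zero:
  fixes p x y :: nat
  assumes "prime p" "p dvd x * y" "0 < x" "x < p" "y < p"
  shows "y = 0"
  using assms prime_dvd_mult_iff[of p x y] dvd_imp_le[of p x] dvd_imp_le[of p y]
  by (cases "y = 0") auto

lemma int_vsub: "p > 0 \<Longrightarrow> int (vsub p x y i) = (int (x i) - int (y i)) mod int p"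
proof -
  assume p: "p > 0"
  have "int (vsub p x y i) = (int (x i) + int (p - y i mod p)) mod int p"
    unfolding vsub_def by (metis of_nat_add of_nat_mod)
  also have "int (p - y i mod p) = int p - int (y i) mod int p"
    using p by (simp add: of_nat_diff of_nat_mod)
  also have "(int (x i) + (int p - int (y i) mod int p)) mod int p
      = (int (x i) - int (y i) mod int p) mod int p"
    by (metis add_diff_eq add.commute mod_add_self1)
  also have "\<dots> = (int (x i) - int (y i)) mod int p" by (simp add: mod_diff_right_eq)
  finally show ?thesis .
qed

lemma vsub_less: "p > 0 \<Longrightarrow> vsub p x y i < p"
  unfolding vsub_def by simp

lemma vsub_eq_0_iff: "p > 0 \<Longrightarrow> x i < p \<Longrightarrow> y i < p \<Longrightarrow> vsub p x y i = 0 \<longleftrightarrow> x i = y i"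
  using int_vsub[of p x y i] eq_if_dvd_diff_less[of p "x i" "y i"]
  by (auto simp: dvd_eq_mod_eq_0 simp flip: of_nat_eq_0_iff)

lemma vsub_0_right: "p > 0 \<Longrightarrow> x i < p \<Longrightarrow> y i = 0 \<Longrightarrow> vsub p x y i = x i"
  unfolding vsub_def by simp

lemma vsub_vsub: "p > 0 \<Longrightarrow> x i < p \<Longrightarrow> y i < p \<Longrightarrow> vsub p x (vsub p x y) i = y i"
  using int_vsub[of p x "vsub p x y" i] int_vsub[of p x y i]
  by (simp add: mod_diff_right_eq flip: of_nat_eq_iff)

lemma vsub_vecs: "p > 0 \<Longrightarrow> x \<in> vecs p S \<Longrightarrow> y \<in> vecs p S \<Longrightarrow> vsub p x y \<in> vecs p S"
  unfolding vecs_def vsub_def by auto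

lemma vecs_less: "p > 0 \<Longrightarrow> x \<in> vecs p S \<Longrightarrow> x i < p"
  unfolding vecs_def by (cases "i \<in> S") auto

lemma restr_vsub: "restr S (vsub p u v) = vsub p (restr S u) (restr S v)"
  unfolding restr_def vsub_def by auto

lemma zero_in_vecs: "p > 0 \<Longrightarrow> (\<lambda>_. 0) \<in> vecs p S"
  unfolding vecs_def by auto

lemma vsub_eq_zero_fun_iff:
  assumes "p > 0" "x \<in> vecs p S" "v \<in> vecs p S"
  shows "vsub p x v = (\<lambda>_. 0) \<longleftrightarrow> x = v"
proof -
  have "vsub p x v i = 0 \<longleftrightarrow> x i = v i" for i
    using vsub_eq_0_iff[of p x i v] vecs_less[OF assms(1,2), of i] vecs_less[OF assms(1,3), of i] assms(1)
    by simp
  then show ?thesis by (auto simp: fun_eq_iff)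
qed

lemma sum_mod_cong:
  fixes f g :: "'a \<Rightarrow> int"
  assumes "\<And>i. i \<in> I \<Longrightarrow> f i mod m = g i mod m"
  shows "sum f I mod m = sum g I mod m"
proof -
  have "sum f I mod m = (\<Sum>i\<in>I. f i mod m) mod m" by (simp add: mod_sum_eq)
  also have "\<dots> = (\<Sum>i\<in>I. g i mod m) mod m" using assms by simp
  also have "\<dots> = sum g I mod m" by (simp add: mod_sum_eq)
  finally show ?thesis .
qed

lemma dvd_sum_mult_vsub_iff:
  assumes "p > 0" "p dvd (\<Sum>i\<in>S. w i * v i)"
  shows "p dvd (\<Sum>i\<in>S. w i * vsub p x v i) \<longleftrightarrow> p dvd (\<Sum>i\<in>S. w i * x i)"
proof -
  have "int (\<Sum>i\<in>S. w i * vsub p x v i) mod int p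
      = (\<Sum>i\<in>S. int (w i) * int (vsub p x v i)) mod int p" by simp
  also have "\<dots> = (\<Sum>i\<in>S. int (w i) * int (x i) - int (w i) * int (v i)) mod int p"
    by (rule sum_mod_cong) (simp add: int_vsub[OF assms(1)] mod_mult_right_eq right_diff_distrib)
  also have "(\<Sum>i\<in>S. int (w i) * int (x i) - int (w i) * int (v i))
      = int (\<Sum>i\<in>S. w i * x i) - int (\<Sum>i\<in>S. w i * v i)"
    by (simp add: sum_subtractf)
  finally have sum_mod: "int (\<Sum>i\<in>S. w i * vsub p x v i) mod int p
      = (int (\<Sum>i\<in>S. w i * x i) - int (\<Sum>i\<in>S. w i * v i)) mod int p" .
  have "int (\<Sum>i\<in>S. w i * v i) mod int p = 0"
    using assms(2) by (auto simp flip: int_dvd_int_iff dvd_eq_mod_eq_0)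
  then have "int (\<Sum>i\<in>S. w i * vsub p x v i) mod int p = int (\<Sum>i\<in>S. w i * x i) mod int p"
    using sum_mod by (metis diff_zero mod_diff_right_eq)
  then show ?thesis by (metis dvd_eq_mod_eq_0 int_dvd_int_iff)
qed

lemma cis_2pi_mult_eq_1_iff: "cis (2 * pi * q) = 1 \<longleftrightarrow> (\<exists>n::int. q = of_int n)"
  by (auto simp: cis_conv_exp exp_eq_1)

lemma omega_pow_eq_1_iff:
  assumes "p > 0"
  shows "omega p ^ m = 1 \<longleftrightarrow> p dvd m"
proof -
  have "omega p ^ m = cis (real m * (2 * pi / real p))"
    by (simp add: omega_def Complex.DeMoivre)
  also have "\<dots> = cis (2 * pi * (real m / real p))"
    by (simp add: field_simps)
  also have "\<dots> = 1 \<longleftrightarrow> (\<exists>n::int. real m / real p = of_int n)"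
    by (rule cis_2pi_mult_eq_1_iff)
  also have "\<dots> \<longleftrightarrow> p dvd m"
  proof
    assume "\<exists>n::int. real m / real p = of_int n"
    then obtain n where "real m = of_int n * real p"
      using assms by (auto simp: field_simps)
    then have "int m = n * int p" by (metis of_int_eq_iff of_int_mult of_int_of_nat_eq)
    then show "p dvd m" by (metis dvd_triv_right int_dvd_int_iff)
  next
    assume "p dvd m"
    then show "\<exists>n::int. real m / real p = of_int n"
      using assms by (auto intro!: exI[of _ "int (m div p)"] simp: real_of_nat_div)
  qed
  finally show ?thesis .
qed

section \<open>Polynomials and Reed-Solomon codes modulo p\<close>

lemma prime_dvd_poly_synthetic_div:
  fixes p a u :: nat and Q :: "int poly"
  assumes "prime p" "int p dvd poly Q (int a)" "int p dvd poly Q (int u)" "u < p" "a < p" "u \<noteq> a"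
  shows "int p dvd poly (synthetic_div Q (int a)) (int u)"
proof -
  have "poly Q (int u) = (int u - int a) * poly (synthetic_div Q (int a)) (int u) + poly Q (int a)"
    by (subst synthetic_div_correct'[of "int a" Q, symmetric]) (simp add: algebra_simps)
  then have "int p dvd (int u - int a) * poly (synthetic_div Q (int a)) (int u)"
    using assms(2,3) by (metis dvd_add_right_iff add.commute)
  moreover have "\<not> int p dvd (int u - int a)"
    using eq_if_dvd_diff_less[of p u a] assms(4-6) by auto
  ultimately show ?thesis using assms(1) by (simp add: prime_dvd_mult_iff)
qed

lemma prime_dvd_coeffs_if_many_roots:
  fixes p :: nat and Q :: "int poly"
  assumes "prime p" "finite R" "R \<subseteq> {0..<p}" "degree Q < card R"
    and "\<forall>u\<in>R. int p dvd poly Q (int u)"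
  shows "int p dvd coeff Q i"
  using assms(2-)
proof (induction R arbitrary: Q i rule: finite_induct)
  case empty then show ?case by simp
next
  case (insert a R Q)
  define Q1 where "Q1 = synthetic_div Q (int a)"
  have pa: "int p dvd poly Q (int a)" using insert by simp
  show ?case
  proof (cases "R = {}")
    case True
    then have "degree Q = 0" using insert by simp
    then obtain c where "Q = [:c:]" using degree0_coeffs by blast
    then show ?thesis using pa by (cases i) auto
  next
    case False
    have "card R > 0" using insert False by (simp add: card_gt_0_iff)
    then have "degree Q1 < card R"
      using insert unfolding Q1_def degree_synthetic_div by simp
    moreover have "int p dvd poly Q1 (int u)" if "u \<in> R" for u
    proof -
      have "int p dvd poly Q (int u)" "u < p" "a < p" "u \<noteq> a" using insert that by auto
      then show ?thesis unfolding Q1_def using prime_dvd_poly_synthetic_div[OF assms(1) pa] by blast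
    qed
    ultimately have IH: "int p dvd coeff Q1 j" for j using insert by auto
    have "coeff Q i = - int a * coeff Q1 i + (case i of 0 \<Rightarrow> poly Q (int a) | Suc j \<Rightarrow> coeff Q1 j)"
      by (subst synthetic_div_correct'[of "int a" Q, symmetric])
        (simp add: Q1_def mult_pCons_left coeff_pCons split: nat.split)
    then show ?thesis using IH pa by (simp split: nat.split)
  qed
qed

definition poly_of_vec :: "nat \<Rightarrow> (nat \<Rightarrow> nat) \<Rightarrow> int poly" where
  "poly_of_vec r c = (\<Sum>i<r. monom (int (c i)) i)"

lemma coeff_poly_of_vec: "coeff (poly_of_vec r c) j = (if j < r then int (c j) else 0)"
  unfolding poly_of_vec_def coeff_sum coeff_monom by (simp add: sum.delta)

lemma poly_poly_of_vec: "poly (poly_of_vec r c) x = (\<Sum>i<r. int (c i) * x ^ i)"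
  unfolding poly_of_vec_def poly_sum poly_monom by simp

lemma degree_poly_of_vec: "degree (poly_of_vec r c) \<le> r - 1"
  by (rule degree_le) (auto simp: coeff_poly_of_vec)

lemma int_ev: "u < p \<Longrightarrow> int (ev p r c u) = poly (poly_of_vec r c) (int u) mod int p"
  unfolding ev_def poly_poly_of_vec by (simp add: of_nat_mod)

lemma inj_on_restr_ev:
  assumes "prime p" "finite R" "R \<subseteq> {0..<p}" "r \<le> card R"
  shows "inj_on (\<lambda>c. restr R (ev p r c)) (vecs p {..<r})"
proof (rule inj_onI)
  fix c c' assume c: "c \<in> vecs p {..<r}" and c': "c' \<in> vecs p {..<r}"
    and eq: "restr R (ev p r c) = restr R (ev p r c')"
  define Q where "Q = poly_of_vec r c - poly_of_vec r c'"
  have "degree Q < card R" if "r > 0"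
    using degree_diff_le_max[of "poly_of_vec r c" "poly_of_vec r c'"]
      degree_poly_of_vec[of r c] degree_poly_of_vec[of r c'] that assms(4)
    unfolding Q_def by linarith
  moreover have "int p dvd poly Q (int u)" if u: "u \<in> R" for u
  proof -
    have "u < p" using u assms(3) by auto
    have "ev p r c u = ev p r c' u" using eq u unfolding restr_def by metis
    then have "poly (poly_of_vec r c) (int u) mod int p = poly (poly_of_vec r c') (int u) mod int p"
      using int_ev[OF \<open>u < p\<close>] by metis
    then show ?thesis by (simp add: Q_def mod_eq_dvd_iff)
  qed
  ultimately have dvd: "int p dvd int (c j) - int (c' j)" if "j < r" for j
    using prime_dvd_coeffs_if_many_roots[OF assms(1-3), of Q j] that
    by (simp add: Q_def coeff_poly_of_vec)
  show "c = c'"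
  proof
    fix j show "c j = c' j"
      using c c' dvd[of j] eq_if_dvd_diff_less[of p "c j" "c' j"] unfolding vecs_def
      by (cases "j < r") auto
  qed
qed

lemma ev_vanishing_exactly_on:
  assumes "prime p" "finite B" "B \<subseteq> {0..<p}" "card B < r"
  shows "\<exists>c\<in>vecs p {..<r}. \<forall>u<p. ev p r c u = 0 \<longleftrightarrow> u \<in> B"
proof -
  define Q where "Q = (\<Prod>j\<in>B. [:- int j, 1:])"
  have "degree Q \<le> card B"
    unfolding Q_def using degree_prod_sum_le[OF assms(2), of "\<lambda>j. [:- int j, 1:]"] by simp
  then have dQ: "degree Q < r" using assms by linarith
  have p: "p > 0" using assms prime_gt_0_nat by blast
  define c where "c i = (if i < r then nat (coeff Q i mod int p) else 0)" for i
  have "c \<in> vecs p {..<r}" unfolding vecs_def c_def using p by (auto simp: nat_less_iff)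
  moreover have "ev p r c u = 0 \<longleftrightarrow> u \<in> B" if u: "u < p" for u
  proof -
    have "int (ev p r c u) = (\<Sum>i<r. int (c i) * int u ^ i) mod int p"
      using int_ev[OF u] poly_poly_of_vec by simp
    also have "\<dots> = (\<Sum>i<r. coeff Q i * int u ^ i) mod int p"
      by (rule sum_mod_cong) (simp add: c_def p mod_mult_left_eq)
    also have "(\<Sum>i<r. coeff Q i * int u ^ i) = poly Q (int u)"
      unfolding poly_altdef using dQ by (intro sum.mono_neutral_right) (auto simp: coeff_eq_0)
    also have "poly Q (int u) = (\<Prod>j\<in>B. int u - int j)" by (simp add: Q_def poly_prod)
    finally have "ev p r c u = 0 \<longleftrightarrow> int p dvd (\<Prod>j\<in>B. int u - int j)"
      by (metis dvd_eq_mod_eq_0 of_nat_eq_0_iff)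
    also have "\<dots> \<longleftrightarrow> (\<exists>j\<in>B. int p dvd int u - int j)"
      using assms(1,2) by (simp add: prime_dvd_prod_iff)
    also have "\<dots> \<longleftrightarrow> u \<in> B"
    proof
      assume "\<exists>j\<in>B. int p dvd int u - int j"
      then obtain j where "j \<in> B" "int p dvd int u - int j" by blast
      moreover have "j < p" using \<open>j \<in> B\<close> assms(3) by auto
      ultimately show "u \<in> B" using eq_if_dvd_diff_less u by blast
    next
      assume "u \<in> B"
      then show "\<exists>j\<in>B. int p dvd int u - int j" by (intro bexI[of _ u]) auto
    qed
    finally show ?thesis .
  qed
  ultimately show ?thesis by blast
qed

lemma exists_pow_not_cong_1:
  assumes "prime p" "0 < m" "m < p - 1"
  shows "\<exists>g. 0 < g \<and> g < p \<and> \<not> int p dvd int g ^ m - 1"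
proof (rule ccontr)
  assume "\<not> ?thesis"
  then have roots: "\<forall>u\<in>{1..<p}. int p dvd poly (monom 1 m - 1) (int u)"
    by (auto simp: poly_monom)
  have deg: "degree (monom (1::int) m - 1) < card {1..<p}"
    using degree_diff_le_max[of "monom (1::int) m" 1] degree_monom_le[of "1::int" m] assms
    by simp
  have "int p dvd coeff (monom 1 m - 1) m"
    by (rule prime_dvd_coeffs_if_many_roots[OF assms(1) _ _ deg roots]) auto
  then have "int p dvd 1" using assms(2) by simp
  then show False using assms by (simp add: prime_gt_1_nat)
qed

lemma bij_betw_mult_mod:
  fixes p g :: nat
  assumes "prime p" "0 < g" "g < p"
  shows "bij_betw (\<lambda>u. g * u mod p) {..<p} {..<p}"
proof -
  have g_coprime: "\<not> int p dvd int g" using assms eq_if_dvd_diff_less[of p g 0] by auto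
  have "inj_on (\<lambda>u. g * u mod p) {..<p}"
  proof (rule inj_onI)
    fix u v assume "u \<in> {..<p}" "v \<in> {..<p}" and eq: "g * u mod p = g * v mod p"
    moreover from eq have "int p dvd int g * (int u - int v)"
      by (metis mod_eq_dvd_iff of_nat_mod of_nat_mult right_diff_distrib)
    then have "int p dvd int u - int v"
      using assms(1) g_coprime by (simp add: prime_dvd_mult_iff)
    ultimately show "u = v" using eq_if_dvd_diff_less by auto
  qed
  moreover have "(\<lambda>u. g * u mod p) ` {..<p} \<subseteq> {..<p}" using assms by auto
  ultimately show ?thesis by (simp add: bij_betw_def endo_inj_surj)
qed

lemma prime_dvd_power_sum:
  assumes "prime p" "m < p - 1"
  shows "int p dvd (\<Sum>u<p. int u ^ m)"
proof (cases "m = 0")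
  case True then show ?thesis by simp
next
  case False
  obtain g where g: "0 < g" "g < p" "\<not> int p dvd int g ^ m - 1"
    using exists_pow_not_cong_1[OF assms(1) _ assms(2)] False by auto
  define S where "S = (\<Sum>u<p. int u ^ m)"
  \<comment> \<open>Multiplication by g permutes the residues, so S is congruent to g^m S with g^m not 1.\<close>
  have "S = (\<Sum>u<p. int (g * u mod p) ^ m)"
    unfolding S_def using sum.reindex_bij_betw[OF bij_betw_mult_mod[OF assms(1) g(1,2)], of "\<lambda>u. int u ^ m"]
    by simp
  then have "S mod int p = (\<Sum>u<p. (int g * int u) ^ m) mod int p"
    by (auto intro!: sum_mod_cong simp: of_nat_mod power_mod)
  also have "\<dots> = (int g ^ m * S) mod int p"
    by (simp add: S_def sum_distrib_left power_mult_distrib)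
  finally have "int p dvd (int g ^ m - 1) * S"
    by (simp add: mod_eq_dvd_iff left_diff_distrib dvd_diff_commute)
  then show ?thesis using g assms(1) by (simp add: prime_dvd_mult_iff S_def)
qed

lemma RS_orthogonal:
  assumes "prime p" "l + r \<le> p"
  shows "int p dvd (\<Sum>u<p. int (ev p l c u) * int (ev p r d u))"
proof -
  define E where "E u = (\<Sum>i<l. int (c i) * int u ^ i)" for u
  define F where "F u = (\<Sum>j<r. int (d j) * int u ^ j)" for u
  have "(\<Sum>u<p. int (ev p l c u) * int (ev p r d u)) mod int p = (\<Sum>u<p. E u * F u) mod int p"
    by (rule sum_mod_cong) (simp add: int_ev poly_poly_of_vec E_def F_def mod_mult_eq)
  moreover have "(\<Sum>u<p. E u * F u)
      = (\<Sum>u<p. \<Sum>i<l. \<Sum>j<r. int (c i) * int (d j) * int u ^ (i + j))"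
    unfolding E_def F_def sum_product by (intro sum.cong refl) (simp add: power_add mult_ac)
  also have "\<dots> = (\<Sum>i<l. \<Sum>j<r. \<Sum>u<p. int (c i) * int (d j) * int u ^ (i + j))"
    by (subst sum.swap) (intro sum.cong refl sum.swap)
  also have "\<dots> = (\<Sum>i<l. \<Sum>j<r. int (c i) * int (d j) * (\<Sum>u<p. int u ^ (i + j)))"
    by (simp add: sum_distrib_left)
  moreover have "int p dvd (\<Sum>i<l. \<Sum>j<r. int (c i) * int (d j) * (\<Sum>u<p. int u ^ (i + j)))"
    using assms by (intro dvd_sum dvd_mult prime_dvd_power_sum) auto
  ultimately show ?thesis by (simp add: dvd_eq_mod_eq_0)
qed

lemma vecs_eq_image_PiE: "vecs p S = restr S ` (S \<rightarrow>\<^sub>E {..<p})"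
proof
  show "vecs p S \<subseteq> restr S ` (S \<rightarrow>\<^sub>E {..<p})"
  proof
    fix x assume x: "x \<in> vecs p S"
    then have "x = restr S (restrict x S)" unfolding vecs_def restr_def by auto
    moreover have "restrict x S \<in> S \<rightarrow>\<^sub>E {..<p}" using x unfolding vecs_def by auto
    ultimately show "x \<in> restr S ` (S \<rightarrow>\<^sub>E {..<p})" by blast
  qed
qed (auto simp: vecs_def restr_def PiE_iff)

lemma card_vecs: "finite S \<Longrightarrow> card (vecs p S) = p ^ card S"
proof -
  assume "finite S"
  have "inj_on (restr S) (S \<rightarrow>\<^sub>E {..<p})"
  proof (rule inj_onI)
    fix f g assume "f \<in> S \<rightarrow>\<^sub>E {..<p}" "g \<in> S \<rightarrow>\<^sub>E {..<p}" and eq: "restr S f = restr S g"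
    have "f i = g i" if "i \<in> S" for i
      using fun_cong[OF eq, of i] that by (simp add: restr_def)
    with \<open>f \<in> S \<rightarrow>\<^sub>E {..<p}\<close> \<open>g \<in> S \<rightarrow>\<^sub>E {..<p}\<close> show "f = g" by (rule PiE_ext)
  qed
  then show ?thesis
    using \<open>finite S\<close> by (simp add: vecs_eq_image_PiE card_image card_PiE)
qed

lemma finite_vecs: "finite S \<Longrightarrow> finite (vecs p S)"
  unfolding vecs_eq_image_PiE by (simp add: finite_PiE)

lemma vecs_lessThan_mono: "p > 0 \<Longrightarrow> k \<le> l \<Longrightarrow> c \<in> vecs p {..<k} \<Longrightarrow> c \<in> vecs p {..<l}"
  unfolding vecs_def by auto

lemma ev_less: "p > 0 \<Longrightarrow> ev p r c u < p"
  unfolding ev_def by simp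

lemma ev_degree_mono:
  assumes "k \<le> l" "c \<in> vecs p {..<k}"
  shows "ev p k c = ev p l c"
proof -
  have "(\<Sum>i<k. c i * u ^ i) = (\<Sum>i<l. c i * u ^ i)" for u
    using assms by (intro sum.mono_neutral_left) (auto simp: vecs_def)
  then show ?thesis unfolding ev_def by presburger
qed

lemma ev_vsub:
  assumes "p > 0"
  shows "ev p r (vsub p c d) = vsub p (ev p r c) (ev p r d)"
proof
  fix u show "ev p r (vsub p c d) u = vsub p (ev p r c) (ev p r d) u"
  proof (cases "u < p")
    case False then show ?thesis by (simp add: ev_def vsub_def)
  next
    case True
    have "int (ev p r (vsub p c d) u) = (\<Sum>i<r. int (vsub p c d i) * int u ^ i) mod int p"
      using int_ev[OF True] by (simp add: poly_poly_of_vec)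
    also have "\<dots> = (\<Sum>i<r. int (c i) * int u ^ i - int (d i) * int u ^ i) mod int p"
      by (rule sum_mod_cong) (simp add: int_vsub[OF assms] mod_mult_left_eq left_diff_distrib)
    also have "\<dots> = (int (ev p r c u) - int (ev p r d u)) mod int p"
      using int_ev[OF True] by (simp add: poly_poly_of_vec sum_subtractf mod_diff_eq)
    also have "\<dots> = int (vsub p (ev p r c) (ev p r d) u)"
      using int_vsub[OF assms] by simp
    finally show ?thesis by simp
  qed
qed

lemma RS_vsub:
  assumes "p > 0" "u \<in> RS p r" "v \<in> RS p r"
  shows "vsub p u v \<in> RS p r"
proof -
  obtain c d where "\<forall>i. c i < p" "u = ev p r c" "\<forall>i. d i < p" "v = ev p r d"
    using assms(2,3) unfolding RS_def by auto
  then have "vsub p u v = ev p r (vsub p c d)" using ev_vsub[OF assms(1)] by simp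
  then show ?thesis using vsub_less[OF assms(1)] unfolding RS_def by blast
qed

lemma RS_less: "p > 0 \<Longrightarrow> u \<in> RS p r \<Longrightarrow> u i < p"
  unfolding RS_def using ev_less by auto

lemma RS_eq_ev_image: "p > 0 \<Longrightarrow> RS p r = ev p r ` vecs p {..<r}"
proof
  assume p: "p > 0"
  show "RS p r \<subseteq> ev p r ` vecs p {..<r}"
  proof
    fix u assume "u \<in> RS p r"
    then obtain c where c: "\<forall>i. c i < p" "u = ev p r c" unfolding RS_def by blast
    define c' where "c' i = (if i < r then c i else 0)" for i
    have "c' \<in> vecs p {..<r}" using c unfolding vecs_def c'_def by auto
    moreover have "u = ev p r c'" using c unfolding ev_def c'_def by auto
    ultimately show "u \<in> ev p r ` vecs p {..<r}" by blast
  qed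
  show "ev p r ` vecs p {..<r} \<subseteq> RS p r"
  proof
    fix u assume "u \<in> ev p r ` vecs p {..<r}"
    then obtain c where "c \<in> vecs p {..<r}" "u = ev p r c" by blast
    moreover from this(1) have "\<forall>i. c i < p" using vecs_less[OF p] by blast
    ultimately show "u \<in> RS p r" unfolding RS_def by blast
  qed
qed

lemma RS_eq_if_restr_eq:
  assumes "prime p" "finite R" "R \<subseteq> {0..<p}" "r \<le> card R"
    and "u \<in> RS p r" "u' \<in> RS p r" "restr R u = restr R u'"
  shows "u = u'"
proof -
  have "p > 0" using assms(1) prime_gt_0_nat by blast
  then obtain c c' where "c \<in> vecs p {..<r}" "u = ev p r c" "c' \<in> vecs p {..<r}" "u' = ev p r c'"
    using RS_eq_ev_image assms(5,6) by blast
  moreover have "c = c'" if "c \<in> vecs p {..<r}" "c' \<in> vecs p {..<r}"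
      "restr R (ev p r c) = restr R (ev p r c')"
    using inj_on_restr_ev[OF assms(1-4)] that by (simp add: inj_on_def)
  ultimately show ?thesis using assms(7) by blast
qed

locale shortened_RS =
  fixes p :: nat and A :: "nat set"
  assumes prime: "prime p" and A_sub: "A \<subseteq> {0..<p}"
begin

definition Ac :: "nat set" where "Ac = {0..<p} - A"

lemma p_pos: "p > 0" using prime prime_gt_0_nat by blast
lemma finite_A: "finite A" using A_sub finite_subset by blast
lemma finite_Ac: "finite Ac" unfolding Ac_def by simp
lemma Ac_sub: "Ac \<subseteq> {0..<p}" unfolding Ac_def by auto
lemma card_Ac: "card Ac = p - card A"
  unfolding Ac_def using A_sub by (simp add: card_Diff_subset finite_A)

lemma SRS_iff: "w \<in> SRS p r A \<longleftrightarrow> (\<exists>u\<in>RS p r. (\<forall>i\<in>A. u i = 0) \<and> w = restr Ac u)"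
  unfolding SRS_def Ac_def by blast

lemma SRS_vecs: "w \<in> SRS p r A \<Longrightarrow> w \<in> vecs p Ac"
  unfolding SRS_iff vecs_def restr_def using RS_less p_pos by auto

lemma SRS_separating:
  assumes "B \<subseteq> Ac" "i \<in> Ac - B" "card A + card B < r"
  obtains w where "w \<in> SRS p r A" "\<forall>j\<in>B. w j = 0" "w i \<noteq> 0"
proof -
  have finB: "finite B" using assms finite_Ac finite_subset by blast
  have card: "card (A \<union> B) < r"
    using assms finB card_Un_le[of A B] by linarith
  have sub: "A \<union> B \<subseteq> {0..<p}" using A_sub assms Ac_sub by auto
  have fin: "finite (A \<union> B)" using finite_A finB by simp
  obtain c where c: "c \<in> vecs p {..<r}" "\<forall>u<p. ev p r c u = 0 \<longleftrightarrow> u \<in> A \<union> B"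
    using ev_vanishing_exactly_on[OF prime fin sub card] by blast
  show ?thesis
  proof
    have "ev p r c \<in> RS p r" using RS_eq_ev_image[OF p_pos] c(1) by blast
    moreover have "\<forall>j\<in>A. ev p r c j = 0" using c(2) A_sub by auto
    ultimately show "restr Ac (ev p r c) \<in> SRS p r A" unfolding SRS_iff by blast
    show "\<forall>j\<in>B. restr Ac (ev p r c) j = 0"
      using c(2) assms(1) Ac_sub unfolding restr_def by auto
    show "restr Ac (ev p r c) i \<noteq> 0"
      using c(2) assms(2) Ac_sub unfolding restr_def Ac_def by auto
  qed
qed

text \<open>A codeword of SRS_r vanishing on the rest of T but not at a point i of T isolates the
  coordinate x i in the orthogonality relation.\<close>
lemma SRS_orthogonal_imp_zero:
  assumes x: "x \<in> vecs p Ac" and orth: "\<forall>w\<in>SRS p r A. p dvd (\<Sum>i\<in>Ac. w i * x i)"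
    and T: "T \<subseteq> Ac" "\<forall>i\<in>Ac - T. x i = 0" "card A + card T \<le> r"
  shows "x = (\<lambda>_. 0)"
proof
  fix i show "x i = 0"
  proof (cases "i \<in> T")
    case False then show ?thesis using x T(2) unfolding vecs_def by auto
  next
    case True
    have card: "card A + card (T - {i}) < r"
      using True T finite_Ac finite_subset[OF T(1)] card_Diff1_less[of T i] by linarith
    obtain w where w: "w \<in> SRS p r A" "\<forall>j\<in>T - {i}. w j = 0" "w i \<noteq> 0"
      by (rule SRS_separating[OF _ _ card]) (use T(1) True in auto)
    have "(\<Sum>j\<in>Ac. w j * x j) = w i * x i + (\<Sum>j\<in>Ac - {i}. w j * x j)"
      using finite_Ac True T(1) by (intro sum.remove) auto
    also have "(\<Sum>j\<in>Ac - {i}. w j * x j) = 0"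
    proof (rule sum.neutral, intro ballI)
      fix j assume "j \<in> Ac - {i}"
      then show "w j * x j = 0" using w(2) T(2) by (cases "j \<in> T") auto
    qed
    finally have "(\<Sum>j\<in>Ac. w j * x j) = w i * x i" by simp
    moreover have "p dvd (\<Sum>j\<in>Ac. w j * x j)" using orth w(1) by blast
    ultimately have "p dvd w i * x i" by simp
    then show ?thesis
      using prime_dvd_mult_less_imp_zero[OF prime] vecs_less[OF p_pos x] vecs_less[OF p_pos SRS_vecs[OF w(1)]] w(3)
      by blast
  qed
qed

lemma restr_RS_orthogonal_SRS:
  assumes "u \<in> RS p l" "w \<in> SRS p r A" "l + r \<le> p"
  shows "p dvd (\<Sum>i\<in>Ac. w i * restr Ac u i)"
proof -
  obtain u' where u': "u' \<in> RS p r" "\<forall>i\<in>A. u' i = 0" "w = restr Ac u'"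
    using assms(2) unfolding SRS_iff by blast
  obtain c d where "u = ev p l c" "u' = ev p r d" using assms(1) u'(1) unfolding RS_def by blast
  moreover have "(\<Sum>i\<in>Ac. w i * restr Ac u i) = (\<Sum>i<p. u' i * u i)"
    using u'(2) unfolding u'(3) restr_def Ac_def by (intro sum.mono_neutral_cong_left) auto
  ultimately show ?thesis
    using RS_orthogonal[OF prime assms(3), of c d] by (simp add: mult.commute flip: int_dvd_int_iff)
qed

end

section \<open>Qudit operators\<close>

definition basis_state :: "(nat \<Rightarrow> nat) \<Rightarrow> state" where
  "basis_state y = (\<lambda>x. if x = y then 1 else 0)"

lemma basis_state_hilb: "y \<in> vecs p S \<Longrightarrow> basis_state y \<in> hilb p S"
  unfolding hilb_def basis_state_def by auto

lemma Zop_basis_state: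
  "y \<in> vecs p S \<Longrightarrow> Zop p S w (basis_state y) = (\<lambda>x. omega p ^ (\<Sum>i\<in>S. w i * y i) * basis_state y x)"
  unfolding Zop_def basis_state_def by auto

lemma Zop_basis_state_zero: "p > 0 \<Longrightarrow> Zop p S w (basis_state (\<lambda>_. 0)) = basis_state (\<lambda>_. 0)"
  using Zop_basis_state[OF zero_in_vecs] by simp

lemma Xop_basis_state_zero:
  "p > 0 \<Longrightarrow> v \<in> vecs p S \<Longrightarrow> Xop p S v (basis_state (\<lambda>_. 0)) = basis_state v"
  using vsub_eq_zero_fun_iff unfolding Xop_def basis_state_def by fastforce

lemma Xop_zero:
  assumes "p > 0" "\<psi> \<in> hilb p S"
  shows "Xop p S (\<lambda>_. 0) \<psi> = \<psi>"
proof -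
  have "vsub p x (\<lambda>_. 0) = x" if "x \<in> vecs p S" for x
    using vecs_less[OF assms(1) that] by (simp add: vsub_def fun_eq_iff)
  then show ?thesis using assms(2) unfolding Xop_def hilb_def by auto
qed

lemma Zop_zero: "\<psi> \<in> hilb p S \<Longrightarrow> Zop p S (\<lambda>_. 0) \<psi> = \<psi>"
  unfolding Zop_def hilb_def by auto

lemma Zop_hilb: "Zop p S b \<psi> \<in> hilb p S"
  unfolding Zop_def hilb_def by auto

lemma Zop_fixes_iff:
  assumes "p > 0" "\<psi> \<in> hilb p S"
  shows "Zop p S w \<psi> = \<psi> \<longleftrightarrow> (\<forall>x. \<psi> x \<noteq> 0 \<longrightarrow> p dvd (\<Sum>i\<in>S. w i * x i))"
proof -
  have "Zop p S w \<psi> x = \<psi> x \<longleftrightarrow> (\<psi> x \<noteq> 0 \<longrightarrow> p dvd (\<Sum>i\<in>S. w i * x i))" for x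
    using assms omega_pow_eq_1_iff[OF assms(1)] unfolding Zop_def hilb_def by auto
  then show ?thesis by (auto simp: fun_eq_iff)
qed

lemma Xop_fixes_iff:
  "\<psi> \<in> hilb p S \<Longrightarrow> Xop p S v \<psi> = \<psi> \<longleftrightarrow> (\<forall>x\<in>vecs p S. \<psi> (vsub p x v) = \<psi> x)"
  unfolding Xop_def hilb_def by (auto simp: fun_eq_iff)

lemma gen_group_base: "g \<in> G \<Longrightarrow> g \<in> gen_group G"
  using gen_mult[OF _ gen_id, of g G] by simp

lemma fixes_css_gens_iff:
  "(\<forall>g\<in>css_gens p S CX CZ. g \<psi> = \<psi>) \<longleftrightarrow>
    (\<forall>v\<in>CX. Xop p S v \<psi> = \<psi>) \<and> (\<forall>w\<in>CZ. Zop p S w \<psi> = \<psi>)"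
  unfolding css_gens_def by blast

lemma code_space_iff:
  "\<psi> \<in> code_space p S G \<longleftrightarrow> \<psi> \<in> hilb p S \<and> (\<forall>g\<in>G. g \<psi> = \<psi>)"
proof -
  have "(\<forall>h\<in>gen_group G. h \<psi> = \<psi>) \<longleftrightarrow> (\<forall>g\<in>G. g \<psi> = \<psi>)"
  proof
    assume "\<forall>h\<in>gen_group G. h \<psi> = \<psi>"
    then show "\<forall>g\<in>G. g \<psi> = \<psi>" using gen_group_base by blast
  next
    assume fixed: "\<forall>g\<in>G. g \<psi> = \<psi>"
    show "\<forall>h\<in>gen_group G. h \<psi> = \<psi>"
    proof
      fix h assume "h \<in> gen_group G"
      then show "h \<psi> = \<psi>" by induction (use fixed in auto)
    qed
  qed
  then show ?thesis unfolding code_space_def by blast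
qed

lemma commute_Zop_imp_dvd:
  assumes "p > 0" "a \<in> vecs p S"
    and "pauli p S a b (Zop p S w (basis_state (\<lambda>_. 0))) = Zop p S w (pauli p S a b (basis_state (\<lambda>_. 0)))"
  shows "p dvd (\<Sum>i\<in>S. w i * a i)"
proof -
  have "pauli p S a b (basis_state (\<lambda>_. 0)) = basis_state a"
    using assms(1,2) by (simp add: pauli_def Zop_basis_state_zero Xop_basis_state_zero)
  then have "basis_state a = Zop p S w (basis_state a)"
    using assms(3) Zop_basis_state_zero[OF assms(1)] by simp
  then have "basis_state a a = Zop p S w (basis_state a) a" by simp
  then have "omega p ^ (\<Sum>i\<in>S. w i * a i) = 1"
    by (simp only: Zop_basis_state[OF assms(2)]) (simp add: basis_state_def)
  then show ?thesis using omega_pow_eq_1_iff[OF assms(1)] by blast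
qed

lemma commute_Xop_imp_dvd:
  assumes "p > 0" "v \<in> vecs p S"
    and "Zop p S b (Xop p S v (basis_state (\<lambda>_. 0))) = Xop p S v (Zop p S b (basis_state (\<lambda>_. 0)))"
  shows "p dvd (\<Sum>i\<in>S. b i * v i)"
proof -
  have "Zop p S b (basis_state v) = basis_state v"
    using assms by (simp add: Xop_basis_state_zero Zop_basis_state_zero)
  then have "Zop p S b (basis_state v) v = basis_state v v" by simp
  then have "omega p ^ (\<Sum>i\<in>S. b i * v i) = 1"
    by (simp only: Zop_basis_state[OF assms(2)]) (simp add: basis_state_def)
  then show ?thesis using omega_pow_eq_1_iff[OF assms(1)] by blast
qed

lemma sum_fun_apply: "sum f A x = (\<Sum>a\<in>A. f a x)"
  by (induction A rule: infinite_finite_induct) (auto simp: plus_fun_def zero_fun_def)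

definition fiber_indicator :: "(nat \<Rightarrow> nat) set \<Rightarrow> ((nat \<Rightarrow> nat) \<Rightarrow> 'a) \<Rightarrow> 'a \<Rightarrow> state" where
  "fiber_indicator D f s = (\<lambda>x. if x \<in> D \<and> f x = s then 1 else 0)"

lemma fiber_indicator_inv_into:
  "s' \<in> f ` D \<Longrightarrow> fiber_indicator D f s (inv_into D f s') = (if s = s' then 1 else 0)"
  by (auto simp: fiber_indicator_def inv_into_into f_inv_into_f)

lemma inj_on_fiber_indicator: "inj_on (fiber_indicator D f) (f ` D)"
proof (rule inj_onI)
  fix s s' assume "s \<in> f ` D" "s' \<in> f ` D" "fiber_indicator D f s = fiber_indicator D f s'"
  then have "fiber_indicator D f s (inv_into D f s') = fiber_indicator D f s' (inv_into D f s')"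
    by simp
  then show "s = s'" by (simp add: fiber_indicator_inv_into[OF \<open>s' \<in> f ` D\<close>] split: if_splits)
qed

context
begin

interpretation states: vector_space "\<lambda>(c::complex) (\<psi>::state). (\<lambda>x. c * \<psi> x)"
  by unfold_locales (simp_all add: fun_eq_iff algebra_simps plus_fun_def)

lemma fiberwise_constant_in_span:
  assumes "finite D" and supp: "\<forall>x. x \<notin> D \<longrightarrow> \<psi> x = 0"
    and const: "\<forall>x\<in>D. \<forall>y\<in>D. f x = f y \<longrightarrow> \<psi> x = \<psi> y"
  shows "\<psi> \<in> states.span (fiber_indicator D f ` f ` D)"
proof -
  let ?rep = "inv_into D f"
  have expand: "\<psi> x = (\<Sum>s\<in>f ` D. \<psi> (?rep s) * fiber_indicator D f s x)" for x
  proof (cases "x \<in> D")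
    case True
    have "(\<Sum>s\<in>f ` D. \<psi> (?rep s) * fiber_indicator D f s x)
        = (\<Sum>s\<in>f ` D. if s = f x then \<psi> (?rep s) else 0)"
      using True by (intro sum.cong) (auto simp: fiber_indicator_def)
    also have "\<dots> = \<psi> (?rep (f x))" using True assms(1) by (simp add: sum.delta)
    also have "\<dots> = \<psi> x" using True const inv_into_into[of "f x" f D] f_inv_into_f[of "f x" f D] by blast
    finally show ?thesis by simp
  next
    case False
    then show ?thesis using supp by (simp add: fiber_indicator_def)
  qed
  have "\<psi> = (\<Sum>s\<in>f ` D. (\<lambda>x. \<psi> (?rep s) * fiber_indicator D f s x))"
    unfolding fun_eq_iff sum_fun_apply using expand by blast
  also have "\<dots> \<in> states.span (fiber_indicator D f ` f ` D)"
    by (intro states.span_sum states.span_scale states.span_base) blast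
  finally show ?thesis .
qed

lemma independent_fiber_indicators: "states.independent (fiber_indicator D f ` f ` D)"
  unfolding states.independent_explicit_module
proof (intro allI impI)
  fix t c b
  assume t: "finite t" "t \<subseteq> fiber_indicator D f ` f ` D" "(\<Sum>v\<in>t. (\<lambda>x. c v * v x)) = 0" "b \<in> t"
  then obtain s where s: "s \<in> f ` D" "b = fiber_indicator D f s" by blast
  let ?x = "inv_into D f s"
  have eval: "v ?x = (if v = b then 1 else 0)" if "v \<in> t" for v
  proof -
    from t(2) that have "v \<in> fiber_indicator D f ` f ` D" by (rule subsetD)
    then obtain s' where s': "v = fiber_indicator D f s'" "s' \<in> f ` D" by (rule imageE)
    have "v = b \<longleftrightarrow> s' = s"
      unfolding s'(1) s(2) using inj_on_eq_iff[OF inj_on_fiber_indicator s'(2) s(1)] .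
    moreover have "v ?x = (if s' = s then 1 else 0)"
      unfolding s'(1) using fiber_indicator_inv_into[OF s(1)] .
    ultimately show ?thesis by simp
  qed
  have "c b = (\<Sum>v\<in>t. if v = b then c v else 0)" using t(1,4) by (simp add: sum.delta)
  also have "\<dots> = (\<Sum>v\<in>t. c v * v ?x)"
    by (intro sum.cong refl) (simp add: eval)
  also have "\<dots> = (\<Sum>v\<in>t. (\<lambda>x. c v * v x)) ?x" by (simp only: sum_fun_apply)
  also have "\<dots> = 0" using t(3) by (simp add: zero_fun_def)
  finally show "c b = 0" .
qed

lemma cdim_fiberwise_constant:
  assumes "finite D"
  shows "cdim {\<psi>. (\<forall>x. x \<notin> D \<longrightarrow> \<psi> x = 0) \<and> (\<forall>x\<in>D. \<forall>y\<in>D. f x = f y \<longrightarrow> \<psi> x = \<psi> y)}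
    = card (f ` D)" (is "cdim ?V = _")
proof -
  have sub: "fiber_indicator D f ` f ` D \<subseteq> ?V" by (auto simp: fiber_indicator_def)
  have span: "?V \<subseteq> states.span (fiber_indicator D f ` f ` D)"
    using fiberwise_constant_in_span[OF assms] by blast
  show ?thesis
    unfolding cdim_def
    using states.dim_unique[OF sub span independent_fiber_indicators card_image[OF inj_on_fiber_indicator]] .
qed

end

section \<open>The shortened Reed-Solomon CSS code\<close>

locale RS_CSS_code = shortened_RS +
  fixes l :: nat
  assumes l_bound: "3 * l \<le> p + 1" and card_A_le: "card A \<le> l"
begin

definition CX :: "(nat \<Rightarrow> nat) set" where "CX = SRS p l A"
definition CZ :: "(nat \<Rightarrow> nat) set" where "CZ = SRS p (p - l) A"

definition CZ_dual :: "(nat \<Rightarrow> nat) set" where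
  "CZ_dual = {x \<in> vecs p Ac. \<forall>w\<in>CZ. p dvd (\<Sum>i\<in>Ac. w i * x i)}"

text \<open>lift x is the RS_l codeword whose restriction to A^c is x, unique since l is at most
  card Ac; label x records its values on the deleted positions A. The fibres of label on CZ_dual
  are the cosets of CX.\<close>

definition lift :: "(nat \<Rightarrow> nat) \<Rightarrow> nat \<Rightarrow> nat" where
  "lift x = (SOME u. u \<in> RS p l \<and> restr Ac u = x)"

definition label :: "(nat \<Rightarrow> nat) \<Rightarrow> nat \<Rightarrow> nat" where
  "label x = restr A (lift x)"

lemma l_le_p_minus_l: "l \<le> p - l"
  using l_bound by arith

lemma l_le_card_Ac: "l \<le> card Ac"
  using l_le_p_minus_l card_A_le card_Ac by linarith

lemma CZ_dual_vecs: "CZ_dual \<subseteq> vecs p Ac"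
  unfolding CZ_dual_def by blast

lemma CZ_dual_vsub_iff:
  assumes "x \<in> vecs p Ac" "v \<in> CZ_dual"
  shows "vsub p x v \<in> CZ_dual \<longleftrightarrow> x \<in> CZ_dual"
proof -
  have "vsub p x v \<in> vecs p Ac" using vsub_vecs[OF p_pos assms(1)] assms(2) CZ_dual_vecs by blast
  moreover have v_orth: "p dvd (\<Sum>i\<in>Ac. w i * v i)" if "w \<in> CZ" for w
    using assms(2) that unfolding CZ_dual_def by blast
  have "p dvd (\<Sum>i\<in>Ac. w i * vsub p x v i) \<longleftrightarrow> p dvd (\<Sum>i\<in>Ac. w i * x i)" if "w \<in> CZ" for w
    using dvd_sum_mult_vsub_iff[OF p_pos v_orth[OF that]] .
  ultimately show ?thesis unfolding CZ_dual_def using assms(1) by simp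
qed

lemma restr_RS_in_CZ_dual: "u \<in> RS p l \<Longrightarrow> restr Ac u \<in> CZ_dual"
  unfolding CZ_dual_def CZ_def
  using restr_RS_orthogonal_SRS[of u l _ "p - l"] l_le_p_minus_l RS_less[OF p_pos]
  by (auto simp: vecs_def restr_def)

lemma CX_subset_CZ_dual: "CX \<subseteq> CZ_dual"
proof
  fix v assume "v \<in> CX"
  then obtain u where "u \<in> RS p l" "v = restr Ac u" unfolding CX_def SRS_iff by blast
  then show "v \<in> CZ_dual" using restr_RS_in_CZ_dual by simp
qed

lemma finite_CZ_dual: "finite CZ_dual"
  using CZ_dual_vecs finite_vecs[OF finite_Ac] finite_subset by blast

text \<open>An element of CZ_dual vanishing on l positions is zero by SRS_orthogonal_imp_zero,
  so restriction to l positions is injective on the subspace CZ_dual.\<close>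
lemma card_CZ_dual_le: "card CZ_dual \<le> p ^ l"
proof -
  obtain L where L: "L \<subseteq> Ac" "card L = l" "finite L"
    using obtain_subset_with_card_n[OF l_le_card_Ac] by blast
  have "inj_on (restr L) CZ_dual"
  proof (rule inj_onI)
    fix x y assume x: "x \<in> CZ_dual" and y: "y \<in> CZ_dual" and eq: "restr L x = restr L y"
    have xv: "x \<in> vecs p Ac" and yv: "y \<in> vecs p Ac" using x y CZ_dual_vecs by auto
    define z where "z = vsub p x y"
    have "z \<in> CZ_dual" unfolding z_def using CZ_dual_vsub_iff[OF xv y] x by blast
    moreover have "\<forall>i\<in>Ac - (Ac - L). z i = 0"
      using fun_cong[OF eq] vsub_eq_0_iff[OF p_pos] vecs_less[OF p_pos xv] vecs_less[OF p_pos yv]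
      unfolding z_def restr_def by (metis Diff_Diff_Int Int_iff)
    moreover have "card A + card (Ac - L) \<le> p - l"
      using L card_Diff_subset[OF L(3,1)] card_Ac card_A_le l_le_p_minus_l by simp
    ultimately have "z = (\<lambda>_. 0)"
      using SRS_orthogonal_imp_zero[of z "p - l" "Ac - L"] CZ_dual_vecs unfolding CZ_dual_def CZ_def
      by blast
    then show "x = y" unfolding z_def using vsub_eq_zero_fun_iff[OF p_pos xv yv] by blast
  qed
  moreover have "restr L ` CZ_dual \<subseteq> vecs p L"
    using CZ_dual_vecs vecs_less[OF p_pos] by (auto simp: vecs_def restr_def)
  ultimately have "card CZ_dual \<le> card (vecs p L)"
    using card_inj_on_le finite_vecs[OF L(3)] by blast
  then show ?thesis using card_vecs[OF L(3)] L(2) by simp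
qed

lemma CZ_dual_eq: "CZ_dual = restr Ac ` RS p l"
proof (rule card_seteq[symmetric])
  show "restr Ac ` RS p l \<subseteq> CZ_dual" using restr_RS_in_CZ_dual by blast
  have "restr Ac ` RS p l = (\<lambda>c. restr Ac (ev p l c)) ` vecs p {..<l}"
    using RS_eq_ev_image[OF p_pos] by (simp add: image_image)
  moreover have "inj_on (\<lambda>c. restr Ac (ev p l c)) (vecs p {..<l})"
    using inj_on_restr_ev[OF prime finite_Ac Ac_sub l_le_card_Ac] .
  ultimately have "card (restr Ac ` RS p l) = p ^ l" by (simp add: card_image card_vecs)
  then show "card CZ_dual \<le> card (restr Ac ` RS p l)" using card_CZ_dual_le by simp
qed (rule finite_CZ_dual)

lemma lift: "x \<in> CZ_dual \<Longrightarrow> lift x \<in> RS p l \<and> restr Ac (lift x) = x"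
proof -
  assume "x \<in> CZ_dual"
  then have "\<exists>u. u \<in> RS p l \<and> restr Ac u = x" unfolding CZ_dual_eq by blast
  then show ?thesis unfolding lift_def by (rule someI_ex)
qed

lemma lift_unique: "u \<in> RS p l \<Longrightarrow> lift (restr Ac u) = u"
  using lift[OF restr_RS_in_CZ_dual] RS_eq_if_restr_eq[OF prime finite_Ac Ac_sub l_le_card_Ac]
  by blast

lemma label_eq_imp_vsub_in_CX:
  assumes "x \<in> CZ_dual" "y \<in> CZ_dual" "label x = label y"
  shows "vsub p x y \<in> CX"
proof -
  obtain u u' where u: "u \<in> RS p l" "x = restr Ac u" and u': "u' \<in> RS p l" "y = restr Ac u'"
    using assms(1,2) unfolding CZ_dual_eq by blast
  have eq: "restr A u = restr A u'"
    using assms(3) unfolding label_def u u' lift_unique[OF u(1)] lift_unique[OF u'(1)] .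
  have "vsub p u u' i = 0" if "i \<in> A" for i
  proof -
    have "u i = u' i" using fun_cong[OF eq, of i] that by (simp add: restr_def)
    then show ?thesis
      using vsub_eq_0_iff[of p u i u'] p_pos RS_less[OF p_pos u(1), of i] RS_less[OF p_pos u'(1), of i]
      by simp
  qed
  moreover have "vsub p x y = restr Ac (vsub p u u')" unfolding u u' restr_vsub ..
  ultimately show ?thesis
    unfolding CX_def SRS_iff using RS_vsub[OF p_pos u(1) u'(1)] by blast
qed

lemma vsub_CX_label:
  assumes "x \<in> CZ_dual" "v \<in> CX"
  shows "vsub p x v \<in> CZ_dual" "label (vsub p x v) = label x"
proof -
  obtain u where u: "u \<in> RS p l" "x = restr Ac u" using assms(1) unfolding CZ_dual_eq by blast
  obtain u' where u': "u' \<in> RS p l" "\<forall>i\<in>A. u' i = 0" "v = restr Ac u'"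
    using assms(2) unfolding CX_def SRS_iff by blast
  have uu': "vsub p u u' \<in> RS p l" using RS_vsub[OF p_pos u(1) u'(1)] .
  have x_v: "vsub p x v = restr Ac (vsub p u u')" unfolding u u' restr_vsub ..
  then show "vsub p x v \<in> CZ_dual" using restr_RS_in_CZ_dual[OF uu'] by simp
  have "label (vsub p x v) = restr A (vsub p u u')"
    unfolding label_def x_v lift_unique[OF uu'] ..
  also have "\<dots> = restr A u"
    using vsub_0_right[of p u _ u'] p_pos RS_less[OF p_pos u(1)] u'(2) by (auto simp: restr_def)
  also have "\<dots> = label x"
    unfolding label_def u(2) lift_unique[OF u(1)] ..
  finally show "label (vsub p x v) = label x" .
qed

lemma card_label_image: "card (label ` CZ_dual) = p ^ card A"
proof -
  let ?Q = "(\<lambda>c. restr A (ev p (card A) c)) ` vecs p {..<card A}"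
  have "inj_on (\<lambda>c. restr A (ev p (card A) c)) (vecs p {..<card A})"
    using inj_on_restr_ev[OF prime finite_A A_sub] by simp
  then have "card ?Q = card (vecs p A)"
    by (simp add: card_image card_vecs finite_A)
  moreover have "?Q \<subseteq> label ` CZ_dual"
  proof
    fix q assume "q \<in> ?Q"
    then obtain c where c: "c \<in> vecs p {..<card A}" "q = restr A (ev p (card A) c)" by blast
    then have cl: "c \<in> vecs p {..<l}" using vecs_lessThan_mono[OF p_pos card_A_le] by blast
    then have "ev p l c \<in> RS p l" using RS_eq_ev_image[OF p_pos] by blast
    then have "label (restr Ac (ev p l c)) = q"
      using lift_unique c ev_degree_mono[OF card_A_le c(1)] by (simp add: label_def)
    then show "q \<in> label ` CZ_dual" using restr_RS_in_CZ_dual[OF \<open>ev p l c \<in> RS p l\<close>] by blast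
  qed
  moreover have "label ` CZ_dual \<subseteq> vecs p A"
    using lift RS_less[OF p_pos] by (fastforce simp: label_def vecs_def restr_def)
  ultimately show ?thesis
    using card_vecs[OF finite_A] finite_vecs[OF finite_A]
    by (metis card_mono card_seteq finite_subset)
qed

lemma code_space_imp_fiberwise_constant:
  assumes "\<psi> \<in> code_space p Ac (css_gens p Ac CX CZ)"
  shows "\<forall>x. x \<notin> CZ_dual \<longrightarrow> \<psi> x = 0"
    and "\<forall>x\<in>CZ_dual. \<forall>y\<in>CZ_dual. label x = label y \<longrightarrow> \<psi> x = \<psi> y"
proof -
  have \<psi>: "\<psi> \<in> hilb p Ac" and X: "\<forall>v\<in>CX. Xop p Ac v \<psi> = \<psi>"
    and Z: "\<forall>w\<in>CZ. Zop p Ac w \<psi> = \<psi>"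
    using assms unfolding code_space_iff fixes_css_gens_iff by blast+
  have "x \<in> CZ_dual" if "\<psi> x \<noteq> 0" for x
  proof -
    have "x \<in> vecs p Ac" using \<psi> that unfolding hilb_def by blast
    moreover have "p dvd (\<Sum>i\<in>Ac. w i * x i)" if "w \<in> CZ" for w
      using Z that Zop_fixes_iff[OF p_pos \<psi>, of w] \<open>\<psi> x \<noteq> 0\<close> by blast
    ultimately show ?thesis unfolding CZ_dual_def by blast
  qed
  then show "\<forall>x. x \<notin> CZ_dual \<longrightarrow> \<psi> x = 0" by blast
  have "\<psi> x = \<psi> y" if "x \<in> CZ_dual" "y \<in> CZ_dual" "label x = label y" for x y
  proof -
    have x: "x \<in> vecs p Ac" and y: "y \<in> vecs p Ac" using that CZ_dual_vecs by auto
    have "Xop p Ac (vsub p x y) \<psi> = \<psi>" using X label_eq_imp_vsub_in_CX[OF that] by blast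
    then have "\<psi> (vsub p x (vsub p x y)) = \<psi> x" using Xop_fixes_iff[OF \<psi>] x by blast
    moreover have "vsub p x (vsub p x y) = y"
      using vsub_vsub[OF p_pos] vecs_less[OF p_pos x] vecs_less[OF p_pos y] by (simp add: fun_eq_iff)
    ultimately show ?thesis by simp
  qed
  then show "\<forall>x\<in>CZ_dual. \<forall>y\<in>CZ_dual. label x = label y \<longrightarrow> \<psi> x = \<psi> y" by blast
qed

lemma fiberwise_constant_imp_code_space:
  assumes supp: "\<And>x. \<psi> x \<noteq> 0 \<Longrightarrow> x \<in> CZ_dual"
    and const: "\<And>x y. x \<in> CZ_dual \<Longrightarrow> y \<in> CZ_dual \<Longrightarrow> label x = label y \<Longrightarrow> \<psi> x = \<psi> y"
  shows "\<psi> \<in> code_space p Ac (css_gens p Ac CX CZ)"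
proof -
  have \<psi>: "\<psi> \<in> hilb p Ac" using supp CZ_dual_vecs unfolding hilb_def by blast
  have "Zop p Ac w \<psi> = \<psi>" if "w \<in> CZ" for w
    unfolding Zop_fixes_iff[OF p_pos \<psi>] using supp that unfolding CZ_dual_def by blast
  moreover have "Xop p Ac v \<psi> = \<psi>" if v: "v \<in> CX" for v
    unfolding Xop_fixes_iff[OF \<psi>]
  proof
    fix x assume x: "x \<in> vecs p Ac"
    show "\<psi> (vsub p x v) = \<psi> x"
    proof (cases "x \<in> CZ_dual")
      case True
      then show ?thesis using const vsub_CX_label[OF True v] by blast
    next
      case False
      then have "vsub p x v \<notin> CZ_dual"
        using CZ_dual_vsub_iff[OF x] CX_subset_CZ_dual v by blast
      then have "\<psi> (vsub p x v) = 0" "\<psi> x = 0" using supp False by blast+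
      then show ?thesis by simp
    qed
  qed
  ultimately show ?thesis unfolding code_space_iff fixes_css_gens_iff using \<psi> by blast
qed

lemma code_space_eq:
  "code_space p Ac (css_gens p Ac CX CZ) =
    {\<psi>. (\<forall>x. x \<notin> CZ_dual \<longrightarrow> \<psi> x = 0) \<and>
         (\<forall>x\<in>CZ_dual. \<forall>y\<in>CZ_dual. label x = label y \<longrightarrow> \<psi> x = \<psi> y)}"
    (is "?C = ?V")
proof (intro equalityI subsetI)
  fix \<psi> assume "\<psi> \<in> ?C"
  then show "\<psi> \<in> ?V" using code_space_imp_fiberwise_constant by blast
next
  fix \<psi> assume "\<psi> \<in> ?V"
  then have "\<And>x. \<psi> x \<noteq> 0 \<Longrightarrow> x \<in> CZ_dual"
    and "\<And>x y. x \<in> CZ_dual \<Longrightarrow> y \<in> CZ_dual \<Longrightarrow> label x = label y \<Longrightarrow> \<psi> x = \<psi> y"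
    by blast+
  then show "\<psi> \<in> ?C" by (rule fiberwise_constant_imp_code_space)
qed

theorem dim_code_space: "cdim (code_space p Ac (css_gens p Ac CX CZ)) = p ^ card A"
  unfolding code_space_eq cdim_fiberwise_constant[OF finite_CZ_dual] card_label_image ..

lemma stabilizer_generators_in_group:
  "v \<in> CX \<Longrightarrow> Xop p Ac v \<in> gen_group (css_gens p Ac CX CZ)"
  "w \<in> CZ \<Longrightarrow> Zop p Ac w \<in> gen_group (css_gens p Ac CX CZ)"
  by (auto intro: gen_group_base simp: css_gens_def)

lemma commuting_pauli_X_part_orthogonal:
  assumes a: "a \<in> vecs p Ac"
    and comm: "\<forall>g\<in>gen_group (css_gens p Ac CX CZ). \<forall>\<psi>\<in>hilb p Ac.
      pauli p Ac a b (g \<psi>) = g (pauli p Ac a b \<psi>)"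
  shows "\<forall>w\<in>CZ. p dvd (\<Sum>i\<in>Ac. w i * a i)"
proof
  fix w assume "w \<in> CZ"
  then have "Zop p Ac w \<in> gen_group (css_gens p Ac CX CZ)" by (rule stabilizer_generators_in_group)
  with comm basis_state_hilb[OF zero_in_vecs[OF p_pos]]
  have "pauli p Ac a b (Zop p Ac w (basis_state (\<lambda>_. 0)))
      = Zop p Ac w (pauli p Ac a b (basis_state (\<lambda>_. 0)))" by blast
  then show "p dvd (\<Sum>i\<in>Ac. w i * a i)" by (rule commute_Zop_imp_dvd[OF p_pos a])
qed

lemma commuting_pauli_Z_part_orthogonal:
  assumes comm: "\<forall>g\<in>gen_group (css_gens p Ac CX CZ). \<forall>\<psi>\<in>hilb p Ac.
      pauli p Ac (\<lambda>_. 0) b (g \<psi>) = g (pauli p Ac (\<lambda>_. 0) b \<psi>)"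
  shows "\<forall>v\<in>CX. p dvd (\<Sum>i\<in>Ac. v i * b i)"
proof
  let ?\<delta> = "basis_state (\<lambda>_. 0)"
  fix v assume "v \<in> CX"
  then have v: "v \<in> vecs p Ac" unfolding CX_def using SRS_vecs by blast
  have pauli_Z: "pauli p Ac (\<lambda>_. 0) b \<psi> = Zop p Ac b \<psi>" if "\<psi> \<in> hilb p Ac" for \<psi>
    using Xop_zero[OF p_pos Zop_hilb] by (simp add: pauli_def)
  have \<delta>: "?\<delta> \<in> hilb p Ac" using basis_state_hilb[OF zero_in_vecs[OF p_pos]] .
  have X\<delta>: "Xop p Ac v ?\<delta> \<in> hilb p Ac"
    using Xop_basis_state_zero[OF p_pos v] basis_state_hilb[OF v] by simp
  have "Xop p Ac v \<in> gen_group (css_gens p Ac CX CZ)"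
    using \<open>v \<in> CX\<close> by (rule stabilizer_generators_in_group)
  with comm \<delta> have "pauli p Ac (\<lambda>_. 0) b (Xop p Ac v ?\<delta>) = Xop p Ac v (pauli p Ac (\<lambda>_. 0) b ?\<delta>)"
    by blast
  then have "Zop p Ac b (Xop p Ac v ?\<delta>) = Xop p Ac v (Zop p Ac b ?\<delta>)"
    unfolding pauli_Z[OF \<delta>] pauli_Z[OF X\<delta>] .
  then show "p dvd (\<Sum>i\<in>Ac. v i * b i)"
    using commute_Xop_imp_dvd[OF p_pos v] by (simp add: mult.commute)
qed

theorem distance:
  assumes logical: "logical_pauli p Ac (css_gens p Ac CX CZ) a b"
  shows "l - card A \<le> pweight Ac a b"
proof (rule ccontr)
  let ?G = "css_gens p Ac CX CZ"
  assume small: "\<not> l - card A \<le> pweight Ac a b"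
  define T where "T = {i\<in>Ac. a i \<noteq> 0 \<or> b i \<noteq> 0}"
  have T: "T \<subseteq> Ac" "card A + card T \<le> l"
    using small unfolding T_def pweight_def by auto
  have a: "a \<in> vecs p Ac" and b: "b \<in> vecs p Ac"
    and comm: "\<forall>g\<in>gen_group ?G. \<forall>\<psi>\<in>hilb p Ac. pauli p Ac a b (g \<psi>) = g (pauli p Ac a b \<psi>)"
    and not_stab: "\<not> (\<exists>c g. cmod c = 1 \<and> g \<in> gen_group ?G \<and>
        (\<forall>\<psi> \<in> hilb p Ac. pauli p Ac a b \<psi> = (\<lambda>x. c * g \<psi> x)))"
    using logical unfolding logical_pauli_def by blast+
  have "card A + card T \<le> p - l" using T(2) l_le_p_minus_l by linarith
  have a0: "a = (\<lambda>_. 0)"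
  proof (rule SRS_orthogonal_imp_zero[OF a _ T(1) _ \<open>card A + card T \<le> p - l\<close>])
    show "\<forall>w\<in>SRS p (p - l) A. p dvd (\<Sum>i\<in>Ac. w i * a i)"
      using commuting_pauli_X_part_orthogonal[OF a comm] unfolding CZ_def .
    show "\<forall>i\<in>Ac - T. a i = 0" unfolding T_def by blast
  qed
  have b0: "b = (\<lambda>_. 0)"
  proof (rule SRS_orthogonal_imp_zero[OF b _ T(1) _ T(2)])
    show "\<forall>v\<in>SRS p l A. p dvd (\<Sum>i\<in>Ac. v i * b i)"
      using commuting_pauli_Z_part_orthogonal[OF comm[unfolded a0]] unfolding CX_def .
    show "\<forall>i\<in>Ac - T. b i = 0" unfolding T_def by blast
  qed
  have "\<forall>\<psi>\<in>hilb p Ac. pauli p Ac a b \<psi> = (\<lambda>x. 1 * id \<psi> x)"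
    using Xop_zero[OF p_pos] Zop_zero unfolding a0 b0 by (simp add: pauli_def)
  then have "\<exists>c g. cmod c = 1 \<and> g \<in> gen_group ?G \<and>
      (\<forall>\<psi>\<in>hilb p Ac. pauli p Ac a b \<psi> = (\<lambda>x. c * g \<psi> x))"
    using gen_id[of ?G] by (intro exI[of _ 1] exI[of _ id]) simp
  then show False using not_stab by blast
qed

end

theorem lemma7:
  fixes p l k :: nat and A :: "nat set"
  assumes "prime p" and "3 * l \<le> p + 1" and "k \<le> l"
    and "A \<subseteq> {0..<p}" and "card A = k"
  defines "Ac \<equiv> {0..<p} - A"
  defines "G \<equiv> css_gens p Ac (SRS p l A) (SRS p (p - l) A)"
  shows "card Ac = p - k
    \<and> cdim (code_space p Ac G) = p ^ k
    \<and> (\<forall>a b. logical_pauli p Ac G a b \<longrightarrow> l - k \<le> pweight Ac a b)"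
proof -
  interpret code: RS_CSS_code p A l
    using assms(1-5) by unfold_locales auto
  have Ac: "Ac = code.Ac" unfolding Ac_def code.Ac_def ..
  have G: "G = css_gens p code.Ac code.CX code.CZ"
    unfolding G_def Ac code.CX_def code.CZ_def ..
  show ?thesis
    using code.card_Ac code.dim_code_space code.distance assms(5) unfolding Ac G by auto
qed

end
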